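(* Let $\mathcal{X}=\{x_0,x_1\}$, $\mathcal{Y}=\{0,1\}$, $\mathcal{H}=\{h_0,h_1\}$ with $h_0(x_0)=h_1(x_0)$, $h_0(x_1)=0$, $h_1(x_1)=1$. Let $\delta\in(0,1)$, $n\in\mathbb{N}$, $\epsilon=\sqrt{\log(1/\delta)/n}$ with $\epsilon<1/2$. For $\sigma\in\{0,1\}$ let $P^\sigma$ be the distribution with $P^\sigma_X(x_1)=1$, $P^\sigma(Y=\sigma\mid X=x_1)=1/2+\epsilon$, and $Q$ the distribution with $Q_X(x_1)=1$, $Q(Y=1\mid X=x_1)=1/2$. Draw $\sigma\sim\mathrm{Unif}(\{0,1\})$ and $t^*\sim\mathrm{Unif}([N])$ independently; then, independently for each $t\in[N]$, draw a dataset $Z_t$ of $n$ i.i.d. samples from $P^\sigma$ if $t=t^*$ and from $Q$ otherwise, and set $Z=(Z_1,\dots,Z_N)$. If $N\ge\delta^{-8}$, then for every learning algorithm $\mathcal{A}$ that maps $Z$ to an element of $\mathcal{H}$ (with no other input), $\mathbb{P}(\mathcal{A}(Z)\neq h_\sigma)\ge (2-\sqrt2)/4$, where $h_\sigma$ is the element of $\mathcal{H}$ with $h_\sigma(x_1)=\sigma$ (the common optimal classifier).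
   Context: The probability is over $\sigma$, $t^*$, and the samples. The target distribution is $\mathcal{D}=P^\sigma$. *)

theory Defs
  imports "HOL-Probability.Probability"
begin

datatype xpt = x0 | x1

type_synonym sample = "xpt \<times> nat"
type_synonym dataset = "nat \<Rightarrow> sample"        \<comment> \<open>samples indexed by {..<n}\<close>
type_synonym datasets = "nat \<Rightarrow> dataset"     \<comment> \<open>datasets indexed by [N] = {1..N}\<close>

definition hyp :: "nat \<Rightarrow> nat \<Rightarrow> xpt \<Rightarrow> nat" where
  "hyp c s = (\<lambda>x. if x = x1 then s else c)"

definition hclass :: "nat \<Rightarrow> (xpt \<Rightarrow> nat) set" where
  "hclass c = {hyp c 0, hyp c 1}"

definition at_x1 :: "real \<Rightarrow> sample pmf" where
  "at_x1 p = map_pmf (\<lambda>b. (x1, of_bool b)) (bernoulli_pmf p)"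

definition Psig :: "real \<Rightarrow> nat \<Rightarrow> sample pmf" where
  "Psig eps \<sigma> = at_x1 (if \<sigma> = 1 then 1/2 + eps else 1/2 - eps)"

definition Qdist :: "sample pmf" where
  "Qdist = at_x1 (1/2)"

definition iid :: "nat \<Rightarrow> sample pmf \<Rightarrow> dataset pmf" where
  "iid n D = Pi_pmf {..<n} (x1, 0) (\<lambda>_. D)"

definition joint :: "real \<Rightarrow> nat \<Rightarrow> nat \<Rightarrow> (nat \<times> datasets) pmf" where
  "joint eps n N =
     do { \<sigma> \<leftarrow> pmf_of_set {0, 1::nat};
          tstar \<leftarrow> pmf_of_set {1..N};
          Z \<leftarrow> Pi_pmf {1..N} (\<lambda>_. (x1, 0))
                 (\<lambda>t. if t = tstar then iid n (Psig eps \<sigma>) else iid n Qdist);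
          return_pmf (\<sigma>, Z) }"

end

theory Submission
  imports Defs
begin

(* Given sigma, Z has the law M_sigma, the uniform mixture over the planted index t* of product
   laws; its density with respect to the null law (all N datasets drawn from Q) is
   L_sigma = (1/N) * sum_t prod_i (dP^sigma/dQ)(Z_t i).  With S = {A = h_0}, any algorithm errs
   with probability (1 - (M_0 S - M_1 S)) / 2.  Since E_Q (L_0 - L_1) = 0, the indicator of S may
   be centred at 1/2, and Cauchy-Schwarz gives M_0 S - M_1 S <= ||L_0 - L_1||_{L2(Q)} / 2.
   The datasets are independent under Q, so the cross terms t <> t' cancel and
   E_Q (L_0 - L_1)^2 = 2 ((1 + 4 eps^2)^n - (1 - 4 eps^2)^n) / N <= 2 exp (4 n eps^2) / N
   = 2 / (delta^4 N) <= 2.  Hence the error is at least (1 - sqrt 2 / 2) / 2. *)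

lemma integral_pmf_density:
  fixes f w :: "'a \<Rightarrow> real"
  assumes q: "finite (set_pmf q)" and p: "\<And>z. pmf p z = pmf q z * w z"
  shows "measure_pmf.expectation p f = measure_pmf.expectation q (\<lambda>z. w z * f z)"
proof -
  have "set_pmf p \<subseteq> set_pmf q"
    using p by (auto simp: set_pmf_iff)
  then have "measure_pmf.expectation p f = (\<Sum>z\<in>set_pmf q. pmf p z * f z)"
    by (subst integral_measure_pmf[OF q]) auto
  also have "\<dots> = (\<Sum>z\<in>set_pmf q. pmf q z * (w z * f z))"
    by (simp add: p mult.assoc)
  also have "\<dots> = measure_pmf.expectation q (\<lambda>z. w z * f z)"
    by (subst integral_measure_pmf[OF q]) auto
  finally show ?thesis .
qed

lemma expectation_pmf_density_eq_1:
  fixes w :: "'a \<Rightarrow> real"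
  assumes "finite (set_pmf q)" and "\<And>z. pmf p z = pmf q z * w z"
  shows "measure_pmf.expectation q w = 1"
  using integral_pmf_density[OF assms, of "\<lambda>_. 1"] by simp

lemma Cauchy_Schwarz_finite_pmf:
  fixes f g :: "'a \<Rightarrow> real"
  assumes q: "finite (set_pmf q)"
  shows "(measure_pmf.expectation q (\<lambda>z. f z * g z))\<^sup>2
      \<le> measure_pmf.expectation q (\<lambda>z. (f z)\<^sup>2) * measure_pmf.expectation q (\<lambda>z. (g z)\<^sup>2)"
proof -
  have E: "measure_pmf.expectation q h = (\<Sum>z\<in>set_pmf q. sqrt (pmf q z) * sqrt (pmf q z) * h z)"
    for h :: "'a \<Rightarrow> real"
    by (subst integral_measure_pmf[OF q]) auto
  show ?thesis
    using Cauchy_Schwarz_ineq_sum[of "\<lambda>z. sqrt (pmf q z) * f z" "\<lambda>z. sqrt (pmf q z) * g z" "set_pmf q"]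
    by (simp add: E power_mult_distrib ac_simps)
qed

lemma prob_diff_le_density_L2:
  fixes w0 w1 :: "'a \<Rightarrow> real"
  assumes q: "finite (set_pmf q)"
    and p0: "\<And>z. pmf p0 z = pmf q z * w0 z" and p1: "\<And>z. pmf p1 z = pmf q z * w1 z"
  shows "measure_pmf.prob p0 S - measure_pmf.prob p1 S
      \<le> sqrt (measure_pmf.expectation q (\<lambda>z. (w0 z - w1 z)\<^sup>2)) / 2"
proof -
  let ?E = "measure_pmf.expectation q"
  have int: "integrable q f" for f :: "'a \<Rightarrow> real"
    using q by (rule integrable_measure_pmf_finite)
  have "?E (\<lambda>z. w0 z - w1 z) = 0"
    using expectation_pmf_density_eq_1[OF q p0] expectation_pmf_density_eq_1[OF q p1] by (simp add: int)
  then have "measure_pmf.prob p0 S - measure_pmf.prob p1 S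
      = ?E (\<lambda>z. (w0 z - w1 z) * (indicator S z - 1/2))"
    using integral_pmf_density[OF q p0, of "indicator S"] integral_pmf_density[OF q p1, of "indicator S"]
    by (simp add: int algebra_simps)
  also have "\<dots> \<le> sqrt ((?E (\<lambda>z. (w0 z - w1 z) * (indicator S z - 1/2)))\<^sup>2)"
    by simp
  also have "\<dots> \<le> sqrt (?E (\<lambda>z. (w0 z - w1 z)\<^sup>2) * ?E (\<lambda>z. (indicator S z - 1/2 :: real)\<^sup>2))"
    using Cauchy_Schwarz_finite_pmf[OF q] by (rule real_sqrt_le_mono)
  also have "(\<lambda>z. (indicator S z - 1/2 :: real)\<^sup>2) = (\<lambda>_. 1/4)"
    by (auto simp: indicator_def power2_eq_square)
  finally show ?thesis
    by (simp add: real_sqrt_mult real_sqrt_divide)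
qed

lemma pmf_Pi_pmf_density:
  assumes "finite I" and "\<And>i x. i \<in> I \<Longrightarrow> pmf (p i) x = pmf (q i) x * w i x"
  shows "pmf (Pi_pmf I d p) z = pmf (Pi_pmf I d q) z * (\<Prod>i\<in>I. w i (z i))"
  using assms by (cases "\<forall>x. x \<notin> I \<longrightarrow> z x = d") (auto simp: pmf_Pi prod.distrib)

lemma finite_set_pmf_Pi_pmf:
  assumes "finite I" and "\<And>i. i \<in> I \<Longrightarrow> finite (set_pmf (p i))"
  shows "finite (set_pmf (Pi_pmf I d p))"
  using assms by (simp add: set_Pi_pmf finite_PiE_dflt)

lemma pmf_at_x1:
  assumes "0 \<le> p" "p \<le> 1"
  shows "pmf (at_x1 p) s = (if s = (x1, 1) then p else if s = (x1, 0) then 1 - p else 0)"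
proof -
  have "(\<lambda>b. (x1, of_bool b :: nat)) -` {s}
      = (if s = (x1, 1) then {True} else if s = (x1, 0) then {False} else {})"
    by (rule set_eqI) (auto simp: of_bool_def)
  then show ?thesis
    unfolding at_x1_def pmf_map using assms by (simp add: measure_pmf_single)
qed

lemma finite_set_pmf_at_x1: "finite (set_pmf (at_x1 p))"
  unfolding at_x1_def by simp

lemma expectation_Qdist:
  fixes h :: "sample \<Rightarrow> real"
  shows "measure_pmf.expectation Qdist h = (h (x1, 1) + h (x1, 0)) / 2"
  unfolding Qdist_def at_x1_def by simp

definition bias :: "real \<Rightarrow> nat \<Rightarrow> real" where
  "bias \<epsilon> \<sigma> = (if \<sigma> = 1 then \<epsilon> else - \<epsilon>)"

lemma Psig_eq_at_x1: "Psig \<epsilon> \<sigma> = at_x1 (1/2 + bias \<epsilon> \<sigma>)"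
  unfolding Psig_def bias_def by simp

text \<open>The likelihood ratio \<open>dP\<^sup>\<sigma>/dQ\<close>; the factor 2 is \<open>1 / Q(s)\<close> on the support of \<open>Q\<close>.\<close>
definition lr :: "real \<Rightarrow> nat \<Rightarrow> sample \<Rightarrow> real" where
  "lr \<epsilon> \<sigma> s = 2 * pmf (Psig \<epsilon> \<sigma>) s"

lemma lr_x1:
  assumes "\<bar>\<epsilon>\<bar> \<le> 1/2"
  shows "lr \<epsilon> \<sigma> (x1, 1) = 1 + 2 * bias \<epsilon> \<sigma>"
    and "lr \<epsilon> \<sigma> (x1, 0) = 1 - 2 * bias \<epsilon> \<sigma>"
  using assms by (auto simp: lr_def Psig_eq_at_x1 pmf_at_x1 bias_def)

lemma pmf_Psig_density:
  assumes "\<bar>\<epsilon>\<bar> \<le> 1/2"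
  shows "pmf (Psig \<epsilon> \<sigma>) s = pmf Qdist s * lr \<epsilon> \<sigma> s"
  using assms by (auto simp: lr_def Qdist_def Psig_eq_at_x1 pmf_at_x1 bias_def)

lemma expectation_lr:
  assumes "\<bar>\<epsilon>\<bar> \<le> 1/2"
  shows "measure_pmf.expectation Qdist (lr \<epsilon> \<sigma>) = 1"
  using pmf_Psig_density[OF assms]
  by (intro expectation_pmf_density_eq_1) (simp_all add: Qdist_def finite_set_pmf_at_x1)

lemma expectation_lr_mult_lr:
  assumes "\<bar>\<epsilon>\<bar> \<le> 1/2"
  shows "measure_pmf.expectation Qdist (\<lambda>s. lr \<epsilon> a s * lr \<epsilon> b s) = 1 + 4 * bias \<epsilon> a * bias \<epsilon> b"
  unfolding expectation_Qdist lr_x1[OF assms] by (simp add: algebra_simps)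

definition null_law :: "nat \<Rightarrow> nat \<Rightarrow> datasets pmf" where
  "null_law n N = Pi_pmf {1..N} (\<lambda>_. (x1, 0)) (\<lambda>_. iid n Qdist)"

definition mixture :: "real \<Rightarrow> nat \<Rightarrow> nat \<Rightarrow> nat \<Rightarrow> datasets pmf" where
  "mixture \<epsilon> n N \<sigma> = pmf_of_set {1..N} \<bind> (\<lambda>tstar. Pi_pmf {1..N} (\<lambda>_. (x1, 0))
     (\<lambda>t. if t = tstar then iid n (Psig \<epsilon> \<sigma>) else iid n Qdist))"

definition lik :: "real \<Rightarrow> nat \<Rightarrow> nat \<Rightarrow> nat \<Rightarrow> datasets \<Rightarrow> real" where
  "lik \<epsilon> n \<sigma> t Z = (\<Prod>i<n. lr \<epsilon> \<sigma> (Z t i))"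

lemma joint_eq_mixture:
  "joint \<epsilon> n N = pmf_of_set {0, 1} \<bind> (\<lambda>\<sigma>. map_pmf (Pair \<sigma>) (mixture \<epsilon> n N \<sigma>))"
  by (simp add: joint_def mixture_def map_pmf_def bind_assoc_pmf bind_return_pmf)

lemma finite_set_pmf_iid:
  "finite (set_pmf (iid n (Psig \<epsilon> \<sigma>)))" "finite (set_pmf (iid n Qdist))"
  unfolding iid_def Psig_def Qdist_def
  by (auto intro!: finite_set_pmf_Pi_pmf finite_set_pmf_at_x1)

lemma finite_set_pmf_null_law: "finite (set_pmf (null_law n N))"
  unfolding null_law_def by (auto intro!: finite_set_pmf_Pi_pmf finite_set_pmf_iid)

lemma finite_set_pmf_mixture: "finite (set_pmf (mixture \<epsilon> n N \<sigma>))"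
  unfolding mixture_def
  by (cases "N = 0") (auto intro!: finite_set_pmf_Pi_pmf finite_set_pmf_iid simp: set_pmf_of_set)

lemma pmf_iid_Psig_density:
  assumes "\<bar>\<epsilon>\<bar> \<le> 1/2"
  shows "pmf (iid n (Psig \<epsilon> \<sigma>)) D = pmf (iid n Qdist) D * (\<Prod>i<n. lr \<epsilon> \<sigma> (D i))"
  unfolding iid_def by (rule pmf_Pi_pmf_density) (simp_all add: pmf_Psig_density[OF assms])

lemma pmf_mixture_density:
  assumes "\<bar>\<epsilon>\<bar> \<le> 1/2" and "0 < N"
  shows "pmf (mixture \<epsilon> n N \<sigma>) Z = pmf (null_law n N) Z * ((\<Sum>t=1..N. lik \<epsilon> n \<sigma> t Z) / N)"
proof -
  have planted: "pmf (Pi_pmf {1..N} (\<lambda>_. (x1, 0))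
        (\<lambda>t. if t = tstar then iid n (Psig \<epsilon> \<sigma>) else iid n Qdist)) Z
      = pmf (null_law n N) Z * lik \<epsilon> n \<sigma> tstar Z" if "tstar \<in> {1..N}" for tstar
    unfolding null_law_def
    by (subst pmf_Pi_pmf_density[where q = "\<lambda>_. iid n Qdist"
          and w = "\<lambda>t D. if t = tstar then \<Prod>i<n. lr \<epsilon> \<sigma> (D i) else 1"])
       (use that in \<open>simp_all add: pmf_iid_Psig_density[OF assms(1)] lik_def\<close>)
  have "pmf (mixture \<epsilon> n N \<sigma>) Z = (\<Sum>tstar=1..N. pmf (Pi_pmf {1..N} (\<lambda>_. (x1, 0))
      (\<lambda>t. if t = tstar then iid n (Psig \<epsilon> \<sigma>) else iid n Qdist)) Z) / N"
    unfolding mixture_def using assms(2) by (subst pmf_bind_pmf_of_set) auto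
  also have "\<dots> = (\<Sum>tstar=1..N. pmf (null_law n N) Z * lik \<epsilon> n \<sigma> tstar Z) / N"
    using planted by (intro arg_cong[where f = "\<lambda>x. x / N"] sum.cong) auto
  finally show ?thesis
    by (simp add: sum_distrib_left)
qed

lemma expectation_null_law_prod:
  fixes G :: "nat \<Rightarrow> sample \<Rightarrow> real"
  assumes "\<And>t s. 0 \<le> G t s"
  shows "measure_pmf.expectation (null_law n N) (\<lambda>Z. \<Prod>t\<in>{1..N}. \<Prod>i<n. G t (Z t i))
       = (\<Prod>t\<in>{1..N}. (measure_pmf.expectation Qdist (G t)) ^ n)"
proof -
  have "measure_pmf.expectation (iid n Qdist) (\<lambda>D. \<Prod>i<n. G t (D i))
      = (measure_pmf.expectation Qdist (G t)) ^ n" for t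
    unfolding iid_def
    by (subst expectation_prod_Pi_pmf)
       (auto intro!: integrable_measure_pmf_finite simp: Qdist_def finite_set_pmf_at_x1 assms)
  then show ?thesis
    unfolding null_law_def
    by (subst expectation_prod_Pi_pmf)
       (auto intro!: integrable_measure_pmf_finite finite_set_pmf_iid prod_nonneg assms)
qed

lemma expectation_lik_mult_lik:
  assumes "\<bar>\<epsilon>\<bar> \<le> 1/2" and "t \<in> {1..N}" "t' \<in> {1..N}"
  shows "measure_pmf.expectation (null_law n N) (\<lambda>Z. lik \<epsilon> n a t Z * lik \<epsilon> n b t' Z)
       = (if t = t' then (1 + 4 * bias \<epsilon> a * bias \<epsilon> b) ^ n else 1)"
proof -
  define C where "C = 1 + 4 * bias \<epsilon> a * bias \<epsilon> b"
  define G where "G = (\<lambda>u s. (if u = t then lr \<epsilon> a s else 1) * (if u = t' then lr \<epsilon> b s else 1))"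
  have "(\<Prod>u\<in>{1..N}. \<Prod>i<n. G u (Z u i))
      = (\<Prod>u\<in>{1..N}. (if u = t then lik \<epsilon> n a t Z else 1) * (if u = t' then lik \<epsilon> n b t' Z else 1))" for Z
    by (intro prod.cong) (auto simp: G_def lik_def prod.distrib)
  then have "lik \<epsilon> n a t Z * lik \<epsilon> n b t' Z = (\<Prod>u\<in>{1..N}. \<Prod>i<n. G u (Z u i))" for Z
    using assms(2,3) by (simp add: prod.distrib prod.delta)
  then have "measure_pmf.expectation (null_law n N) (\<lambda>Z. lik \<epsilon> n a t Z * lik \<epsilon> n b t' Z)
      = measure_pmf.expectation (null_law n N) (\<lambda>Z. \<Prod>u\<in>{1..N}. \<Prod>i<n. G u (Z u i))"
    by presburger
  also have "\<dots> = (\<Prod>u\<in>{1..N}. (measure_pmf.expectation Qdist (G u)) ^ n)"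
    by (rule expectation_null_law_prod) (simp add: G_def lr_def)
  also have "\<dots> = (\<Prod>u\<in>{1..N}. if u = t \<and> u = t' then C ^ n else 1)"
  proof (intro prod.cong refl)
    fix u
    show "(measure_pmf.expectation Qdist (G u)) ^ n = (if u = t \<and> u = t' then C ^ n else 1)"
      by (cases "u = t"; cases "u = t'")
         (simp_all add: G_def C_def expectation_lr_mult_lr[OF assms(1)] expectation_lr[OF assms(1)])
  qed
  also have "\<dots> = (if t = t' then C ^ n else 1)"
    using assms(2) by (cases "t = t'") (auto simp: prod.delta intro: prod.neutral)
  finally show ?thesis
    unfolding C_def .
qed

lemma expectation_mixture_density_diff_sq:
  assumes "\<bar>\<epsilon>\<bar> \<le> 1/2" and "0 < N"
  shows "measure_pmf.expectation (null_law n N)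
      (\<lambda>Z. ((\<Sum>t=1..N. lik \<epsilon> n 0 t Z) / N - (\<Sum>t=1..N. lik \<epsilon> n 1 t Z) / N)\<^sup>2)
    = 2 * ((1 + 4 * \<epsilon>\<^sup>2) ^ n - (1 - 4 * \<epsilon>\<^sup>2) ^ n) / N"
proof -
  let ?E = "measure_pmf.expectation (null_law n N)"
  define K where "K = 2 * ((1 + 4 * \<epsilon>\<^sup>2) ^ n - (1 - 4 * \<epsilon>\<^sup>2) ^ n)"
  define d where "d t Z = lik \<epsilon> n 0 t Z - lik \<epsilon> n 1 t Z" for t Z
  have int: "integrable (null_law n N) f" for f :: "datasets \<Rightarrow> real"
    by (rule integrable_measure_pmf_finite[OF finite_set_pmf_null_law])
  have cross: "?E (\<lambda>Z. d t Z * d t' Z) = (if t = t' then K else 0)"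
    if "t \<in> {1..N}" "t' \<in> {1..N}" for t t'
  proof -
    have "?E (\<lambda>Z. d t Z * d t' Z)
        = ?E (\<lambda>Z. lik \<epsilon> n 0 t Z * lik \<epsilon> n 0 t' Z) - ?E (\<lambda>Z. lik \<epsilon> n 0 t Z * lik \<epsilon> n 1 t' Z)
          - ?E (\<lambda>Z. lik \<epsilon> n 1 t Z * lik \<epsilon> n 0 t' Z) + ?E (\<lambda>Z. lik \<epsilon> n 1 t Z * lik \<epsilon> n 1 t' Z)"
      by (simp add: d_def algebra_simps int)
    then show ?thesis
      by (simp add: expectation_lik_mult_lik[OF assms(1) that] bias_def K_def power2_eq_square mult.assoc)
  qed
  have "((\<Sum>t=1..N. lik \<epsilon> n 0 t Z) / N - (\<Sum>t=1..N. lik \<epsilon> n 1 t Z) / N)\<^sup>2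
      = (\<Sum>t=1..N. \<Sum>t'=1..N. d t Z * d t' Z) / (real N)\<^sup>2" for Z
    unfolding power_divide power2_eq_square sum_product[symmetric]
    by (simp add: d_def sum_subtractf flip: diff_divide_distrib)
  then have "?E (\<lambda>Z. ((\<Sum>t=1..N. lik \<epsilon> n 0 t Z) / N - (\<Sum>t=1..N. lik \<epsilon> n 1 t Z) / N)\<^sup>2)
      = (\<Sum>t=1..N. \<Sum>t'=1..N. ?E (\<lambda>Z. d t Z * d t' Z)) / (real N)\<^sup>2"
    by (simp add: int)
  also have "\<dots> = (\<Sum>t=1..N. K) / (real N)\<^sup>2"
  proof -
    have "(\<Sum>t'=1..N. ?E (\<lambda>Z. d t Z * d t' Z)) = K" if "t \<in> {1..N}" for t
    proof -
      have "(\<Sum>t'=1..N. ?E (\<lambda>Z. d t Z * d t' Z)) = (\<Sum>t'=1..N. if t = t' then K else 0)"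
        using that by (intro sum.cong) (simp_all add: cross)
      then show ?thesis
        using that by simp
    qed
    then show ?thesis
      by simp
  qed
  also have "\<dots> = K / N"
    using assms(2) by (simp add: power2_eq_square)
  finally show ?thesis
    unfolding K_def .
qed

lemma prob_two_point_error:
  fixes M :: "nat \<Rightarrow> 'a pmf" and A :: "'a \<Rightarrow> xpt \<Rightarrow> nat"
  assumes "\<And>\<sigma>. finite (set_pmf (M \<sigma>))" and "\<forall>Z. A Z \<in> hclass c"
  shows "measure_pmf.prob (pmf_of_set {0, 1} \<bind> (\<lambda>\<sigma>. map_pmf (Pair \<sigma>) (M \<sigma>)))
      {(\<sigma>, Z). A Z \<noteq> hyp c \<sigma>}
    = (1 - (measure_pmf.prob (M 0) {Z. A Z = hyp c 0} - measure_pmf.prob (M 1) {Z. A Z = hyp c 0})) / 2"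
proof -
  let ?S = "{Z. A Z = hyp c 0}"
  have "hyp c 0 \<noteq> hyp c 1"
    by (auto simp: hyp_def fun_eq_iff)
  then have wrong1: "{Z. A Z \<noteq> hyp c 1} = ?S"
    using assms(2) by (auto simp: hclass_def)
  let ?Err = "{(\<sigma>, Z). A Z \<noteq> hyp c \<sigma>}"
  let ?J = "pmf_of_set {0, 1} \<bind> (\<lambda>\<sigma>. map_pmf (Pair \<sigma>) (M \<sigma>))"
  have "measure_pmf.prob ?J ?Err = measure_pmf.expectation ?J (indicator ?Err)"
    by simp
  also have "\<dots> = (measure_pmf.prob (M 0) (- ?S) + measure_pmf.prob (M 1) {Z. A Z \<noteq> hyp c 1}) / 2"
    by (subst pmf_expectation_bind_pmf_of_set)
       (auto simp: assms(1) vimage_def Compl_eq add_divide_distrib)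
  also have "\<dots> = (1 - (measure_pmf.prob (M 0) ?S - measure_pmf.prob (M 1) ?S)) / 2"
    unfolding wrong1 Compl_eq_Diff_UNIV using measure_pmf.prob_compl[of ?S "M 0"] by simp
  finally show ?thesis .
qed

lemma one_add_four_eps_sq_power_le:
  assumes "0 < \<delta>" and "\<delta> < 1" and "\<epsilon> = sqrt (ln (1 / \<delta>) / real n)"
  shows "(1 + 4 * \<epsilon>\<^sup>2) ^ n \<le> (1 / \<delta>) ^ 4"
proof (cases "n = 0")
  case True
  then show ?thesis
    using assms(1,2) by simp
next
  case False
  have "\<epsilon>\<^sup>2 = ln (1 / \<delta>) / n"
    using assms by simp
  have "(1 + 4 * \<epsilon>\<^sup>2) ^ n \<le> exp (4 * \<epsilon>\<^sup>2) ^ n"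
    by (intro power_mono) (auto intro: exp_ge_add_one_self)
  also have "\<dots> = exp (4 * ln (1 / \<delta>))"
    using False by (simp add: \<open>\<epsilon>\<^sup>2 = ln (1 / \<delta>) / n\<close> flip: exp_of_nat_mult)
  also have "\<dots> = (1 / \<delta>) ^ 4"
    using assms(1) by (simp add: exp_of_nat_mult[of 4, simplified])
  finally show ?thesis .
qed

theorem theorem4p2:
  fixes \<delta> \<epsilon> :: real and n N c :: nat
    and A :: "datasets \<Rightarrow> (xpt \<Rightarrow> nat)"
  assumes "c \<in> {0, 1}"
    and "0 < \<delta>" and "\<delta> < 1"
    and "\<epsilon> = sqrt (ln (1 / \<delta>) / real n)"
    and "\<epsilon> < 1/2"
    and "real N \<ge> (1 / \<delta>) ^ 8"
    and "\<forall>Z. A Z \<in> hclass c"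
  shows "measure_pmf.prob (joint \<epsilon> n N) {(\<sigma>, Z). A Z \<noteq> hyp c \<sigma>} \<ge> (2 - sqrt 2) / 4"
proof -
  have "0 \<le> \<epsilon>"
    using assms(2-4) by simp
  then have eps: "\<bar>\<epsilon>\<bar> \<le> 1/2" "4 * \<epsilon>\<^sup>2 \<le> 1"
    using assms(5) mult_mono[of \<epsilon> "1/2" \<epsilon> "1/2"] by (auto simp: power2_eq_square)
  have "1 \<le> 1 / \<delta>"
    using assms(2,3) by simp
  then have "(1 / \<delta>) ^ 4 \<le> (1 / \<delta>) ^ 8" and "1 \<le> (1 / \<delta>) ^ 8"
    by (auto intro: power_increasing one_le_power)
  then have growth: "(1 + 4 * \<epsilon>\<^sup>2) ^ n \<le> N" and N: "0 < N"
    using one_add_four_eps_sq_power_le[OF assms(2-4)] assms(6) by linarith+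
  define L where "L \<sigma> Z = (\<Sum>t=1..N. lik \<epsilon> n \<sigma> t Z) / N" for \<sigma> Z
  have dens: "pmf (mixture \<epsilon> n N \<sigma>) Z = pmf (null_law n N) Z * L \<sigma> Z" for \<sigma> Z
    unfolding L_def by (rule pmf_mixture_density[OF eps(1) N])
  have "measure_pmf.expectation (null_law n N) (\<lambda>Z. (L 0 Z - L 1 Z)\<^sup>2)
      \<le> 2 * (1 + 4 * \<epsilon>\<^sup>2) ^ n / N"
    unfolding L_def expectation_mixture_density_diff_sq[OF eps(1) N]
    using eps(2) by (simp add: divide_right_mono)
  also have "\<dots> \<le> 2"
    using growth N by (simp add: divide_le_eq)
  finally have chi_sq: "measure_pmf.expectation (null_law n N) (\<lambda>Z. (L 0 Z - L 1 Z)\<^sup>2) \<le> 2" .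
  have "measure_pmf.prob (mixture \<epsilon> n N 0) {Z. A Z = hyp c 0}
      - measure_pmf.prob (mixture \<epsilon> n N 1) {Z. A Z = hyp c 0}
      \<le> sqrt (measure_pmf.expectation (null_law n N) (\<lambda>Z. (L 0 Z - L 1 Z)\<^sup>2)) / 2"
    by (rule prob_diff_le_density_L2[OF finite_set_pmf_null_law dens dens])
  also have "\<dots> \<le> sqrt 2 / 2"
    using chi_sq by (simp add: divide_right_mono)
  finally show ?thesis
    unfolding joint_eq_mixture prob_two_point_error[OF finite_set_pmf_mixture assms(7)]
    by simp
qed

end
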